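(* Let $(R,+,\cdot)$ be a Commutative Ring with Unity $1$ and additive identity $0$, and let $(\mathbb S,+_{\mathbb S},\cdot_{\mathbb S})$ be the structure on $\mathbb S=R\times R$ described in the context. Then $(\mathbb S,+_{\mathbb S},\cdot_{\mathbb S})$ is an S-Ring with $(\mathbb S_0,+_{\mathbb S},\cdot_{\mathbb S})\cong(R,+,\cdot)$; that is, $(\mathbb S,+_{\mathbb S},\cdot_{\mathbb S})$ is a Proper S-Ring Extension of $(R,+,\cdot)$.
   Context: Construction: $\mathbb S=R\times R=\{(x,y):x,y\in R\}$, with $\mathbf 0=(0,0)$ and distinguished element $\mathbf 1=(1,0)$, and operations $(x,y)+_{\mathbb S}(u,v)=(x+u,\,y+v)$ and $(x,y)\cdot_{\mathbb S}(u,v)=(x\cdot u+y+v-x\cdot v-y\cdot u,\;y\cdot v+x\cdot v+y\cdot u)$. General definitions (written for a structure $(\mathbb S,+,\cdot)$ with zero $0$ and distinguished element $1$): An S-Structure is a triple $(\mathbb S,+,\cdot)$ where $+,\cdot$ are binary operations on the set $\mathbb S$ such that $(\mathbb S,+)$ is a commutative group with identity $0$ (inverse $-s$, $s-t:=s+(-t)$), $\mathbb S$ is closed under $\cdot$, and there is $s\in\mathbb S$ with $0\cdot s\neq0$ or $s\cdot0\neq0$. Commutative: $s\cdot t=t\cdot s$ for all $s,t$. For $\alpha\in\mathbb S$: $\mathbb S_\alpha=\{s:0\cdot s=s\cdot0=\alpha\}$, $\Lambda=\{\alpha:\mathbb S_\alpha\neq\emptyset\}$. Wheel Distributive: $s\cdot(t+r)+(s\cdot0)=(s\cdot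 t)+(s\cdot r)$ for all $s,t,r$. S-Associative: for all $m,n\in\mathbb S_0$, $s\in\mathbb S$, $m\cdot(n\cdot s)=(m\cdot n)\cdot s-([(m-1)\cdot(n-1)]\cdot(0\cdot s))$. Base: if $\mathbb S_0\neq\emptyset$, $\alpha\in\Lambda$, then $q\in\mathbb S_\alpha$ is a Base for $\mathbb S_\alpha$ if $q+\beta\in\mathbb S_\alpha$ for all $\beta\in\mathbb S_0$ and each $s\in\mathbb S_\alpha$ is $q+\beta$ for some $\beta\in\mathbb S_0$; Coordinated: $\mathbb S_0\neq\emptyset$ and each $\mathbb S_\alpha$, $\alpha\in\Lambda$, has a Base. Standard Bases (for a Coordinated Commutative S-Structure): there is a specified $q_0(1)\in\mathbb S_1$ which is a Base for $\mathbb S_1$, and for each $\alpha\in\Lambda$, $q_0(\alpha):=\alpha\cdot(q_0(1)+1)-1$ lies in $\mathbb S_\alpha$ and is a Base for $\mathbb S_\alpha$. Essential S-Structure: Commutative, Wheel Distributive, S-Associative, has Standard Bases, $0,1\in\mathbb S_0$, and $\mathbb S_0=\{1\cdot x:x\in\mathbb S_0\}$. Unity: $e\in\Lambda$ with $e\cdot s=s\cdot e=s$ for all $s$. S-Ring: Essential S-Structure with a Unity. S-Extension: $(\mathbb S,+,\cdot)$ is an S-Extension of $(F,+_F,\cdot_F)$ if $F$ is closed under $+_F$ and $\cdot_F$, $(\mathbb S,+,\cdot)$ is an S-Structure, and there is $F_{\mathbb S}\subset\mathbb S$ and an isomorphism $\phi:(F,+_F,\cdot_F)\to(F_{\mathbb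 S},+,\cdot)$. It is a Proper S-Extension if moreover $(\mathbb S_0,+,\cdot)\cong(F,+_F,\cdot_F)$. A Proper S-Ring Extension is an S-Ring that is a Proper S-Extension. *)

theory Defs
  imports Main
begin

definition s_neg :: "'b set \<Rightarrow> ('b \<Rightarrow> 'b \<Rightarrow> 'b) \<Rightarrow> 'b \<Rightarrow> 'b \<Rightarrow> 'b" where
  "s_neg S p z s = (THE t. t \<in> S \<and> p s t = z)"

definition s_sub :: "'b set \<Rightarrow> ('b \<Rightarrow> 'b \<Rightarrow> 'b) \<Rightarrow> 'b \<Rightarrow> 'b \<Rightarrow> 'b \<Rightarrow> 'b" where
  "s_sub S p z s t = p s (s_neg S p z t)"

definition s_structure :: "'b set \<Rightarrow> ('b \<Rightarrow> 'b \<Rightarrow> 'b) \<Rightarrow> ('b \<Rightarrow> 'b \<Rightarrow> 'b) \<Rightarrow> 'b \<Rightarrow> bool" where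
  "s_structure S p m z \<longleftrightarrow>
     z \<in> S \<and>
     (\<forall>a\<in>S. \<forall>b\<in>S. p a b \<in> S) \<and>
     (\<forall>a\<in>S. \<forall>b\<in>S. \<forall>c\<in>S. p (p a b) c = p a (p b c)) \<and>
     (\<forall>a\<in>S. \<forall>b\<in>S. p a b = p b a) \<and>
     (\<forall>a\<in>S. p z a = a) \<and>
     (\<forall>a\<in>S. \<exists>b\<in>S. p a b = z) \<and>
     (\<forall>a\<in>S. \<forall>b\<in>S. m a b \<in> S) \<and>
     (\<exists>s\<in>S. m z s \<noteq> z \<or> m s z \<noteq> z)"

definition s_commutative :: "'b set \<Rightarrow> ('b \<Rightarrow> 'b \<Rightarrow> 'b) \<Rightarrow> bool" where
  "s_commutative S m \<longleftrightarrow> (\<forall>s\<in>S. \<forall>t\<in>S. m s t = m t s)"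

definition S_sub :: "'b set \<Rightarrow> ('b \<Rightarrow> 'b \<Rightarrow> 'b) \<Rightarrow> 'b \<Rightarrow> 'b \<Rightarrow> 'b set" where
  "S_sub S m z \<alpha> = {s \<in> S. m z s = \<alpha> \<and> m s z = \<alpha>}"

definition S_Lambda :: "'b set \<Rightarrow> ('b \<Rightarrow> 'b \<Rightarrow> 'b) \<Rightarrow> 'b \<Rightarrow> 'b set" where
  "S_Lambda S m z = {\<alpha>. S_sub S m z \<alpha> \<noteq> {}}"

definition wheel_distributive :: "'b set \<Rightarrow> ('b \<Rightarrow> 'b \<Rightarrow> 'b) \<Rightarrow> ('b \<Rightarrow> 'b \<Rightarrow> 'b) \<Rightarrow> 'b \<Rightarrow> bool" where
  "wheel_distributive S p m z \<longleftrightarrow>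
     (\<forall>s\<in>S. \<forall>t\<in>S. \<forall>r\<in>S. p (m s (p t r)) (m s z) = p (m s t) (m s r))"

definition s_associative :: "'b set \<Rightarrow> ('b \<Rightarrow> 'b \<Rightarrow> 'b) \<Rightarrow> ('b \<Rightarrow> 'b \<Rightarrow> 'b) \<Rightarrow> 'b \<Rightarrow> 'b \<Rightarrow> bool" where
  "s_associative S p m z e \<longleftrightarrow>
     (\<forall>a\<in>S_sub S m z z. \<forall>b\<in>S_sub S m z z. \<forall>s\<in>S.
        m a (m b s) = s_sub S p z (m (m a b) s)
                        (m (m (s_sub S p z a e) (s_sub S p z b e)) (m z s)))"

definition is_base :: "'b set \<Rightarrow> ('b \<Rightarrow> 'b \<Rightarrow> 'b) \<Rightarrow> ('b \<Rightarrow> 'b \<Rightarrow> 'b) \<Rightarrow> 'b \<Rightarrow> 'b \<Rightarrow> 'b \<Rightarrow> bool" where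
  "is_base S p m z \<alpha> q \<longleftrightarrow>
     q \<in> S_sub S m z \<alpha> \<and>
     (\<forall>\<beta>\<in>S_sub S m z z. p q \<beta> \<in> S_sub S m z \<alpha>) \<and>
     (\<forall>s\<in>S_sub S m z \<alpha>. \<exists>\<beta>\<in>S_sub S m z z. s = p q \<beta>)"

definition coordinated :: "'b set \<Rightarrow> ('b \<Rightarrow> 'b \<Rightarrow> 'b) \<Rightarrow> ('b \<Rightarrow> 'b \<Rightarrow> 'b) \<Rightarrow> 'b \<Rightarrow> bool" where
  "coordinated S p m z \<longleftrightarrow>
     S_sub S m z z \<noteq> {} \<and> (\<forall>\<alpha>\<in>S_Lambda S m z. \<exists>q. is_base S p m z \<alpha> q)"

definition has_standard_bases :: "'b set \<Rightarrow> ('b \<Rightarrow> 'b \<Rightarrow> 'b) \<Rightarrow> ('b \<Rightarrow> 'b \<Rightarrow> 'b) \<Rightarrow> 'b \<Rightarrow> 'b \<Rightarrow> bool" where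
  "has_standard_bases S p m z e \<longleftrightarrow>
     coordinated S p m z \<and> s_commutative S m \<and>
     (\<exists>q1. is_base S p m z e q1 \<and>
        (\<forall>\<alpha>\<in>S_Lambda S m z. is_base S p m z \<alpha> (s_sub S p z (m \<alpha> (p q1 e)) e)))"

definition essential_s_structure :: "'b set \<Rightarrow> ('b \<Rightarrow> 'b \<Rightarrow> 'b) \<Rightarrow> ('b \<Rightarrow> 'b \<Rightarrow> 'b) \<Rightarrow> 'b \<Rightarrow> 'b \<Rightarrow> bool" where
  "essential_s_structure S p m z e \<longleftrightarrow>
     s_structure S p m z \<and> e \<in> S \<and>
     s_commutative S m \<and> wheel_distributive S p m z \<and> s_associative S p m z e \<and>
     has_standard_bases S p m z e \<and>
     z \<in> S_sub S m z z \<and> e \<in> S_sub S m z z \<and>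
     S_sub S m z z = {m e x | x. x \<in> S_sub S m z z}"

definition is_unity :: "'b set \<Rightarrow> ('b \<Rightarrow> 'b \<Rightarrow> 'b) \<Rightarrow> 'b \<Rightarrow> 'b \<Rightarrow> bool" where
  "is_unity S m z u \<longleftrightarrow> u \<in> S_Lambda S m z \<and> (\<forall>s\<in>S. m u s = s \<and> m s u = s)"

definition s_ring :: "'b set \<Rightarrow> ('b \<Rightarrow> 'b \<Rightarrow> 'b) \<Rightarrow> ('b \<Rightarrow> 'b \<Rightarrow> 'b) \<Rightarrow> 'b \<Rightarrow> 'b \<Rightarrow> bool" where
  "s_ring S p m z e \<longleftrightarrow> essential_s_structure S p m z e \<and> (\<exists>u. is_unity S m z u)"

definition iso_on :: "'a set \<Rightarrow> ('a \<Rightarrow> 'a \<Rightarrow> 'a) \<Rightarrow> ('a \<Rightarrow> 'a \<Rightarrow> 'a) \<Rightarrow>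
    'b set \<Rightarrow> ('b \<Rightarrow> 'b \<Rightarrow> 'b) \<Rightarrow> ('b \<Rightarrow> 'b \<Rightarrow> 'b) \<Rightarrow> ('a \<Rightarrow> 'b) \<Rightarrow> bool" where
  "iso_on A pA mA B pB mB \<phi> \<longleftrightarrow> bij_betw \<phi> A B \<and>
     (\<forall>x\<in>A. \<forall>y\<in>A. \<phi> (pA x y) = pB (\<phi> x) (\<phi> y) \<and> \<phi> (mA x y) = mB (\<phi> x) (\<phi> y))"

definition isomorphic :: "'a set \<Rightarrow> ('a \<Rightarrow> 'a \<Rightarrow> 'a) \<Rightarrow> ('a \<Rightarrow> 'a \<Rightarrow> 'a) \<Rightarrow>
    'b set \<Rightarrow> ('b \<Rightarrow> 'b \<Rightarrow> 'b) \<Rightarrow> ('b \<Rightarrow> 'b \<Rightarrow> 'b) \<Rightarrow> bool" where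
  "isomorphic A pA mA B pB mB \<longleftrightarrow> (\<exists>\<phi>. iso_on A pA mA B pB mB \<phi>)"

definition s_extension :: "'b set \<Rightarrow> ('b \<Rightarrow> 'b \<Rightarrow> 'b) \<Rightarrow> ('b \<Rightarrow> 'b \<Rightarrow> 'b) \<Rightarrow> 'b \<Rightarrow>
    'a set \<Rightarrow> ('a \<Rightarrow> 'a \<Rightarrow> 'a) \<Rightarrow> ('a \<Rightarrow> 'a \<Rightarrow> 'a) \<Rightarrow> bool" where
  "s_extension S p m z F pF mF \<longleftrightarrow>
     (\<forall>x\<in>F. \<forall>y\<in>F. pF x y \<in> F \<and> mF x y \<in> F) \<and>
     s_structure S p m z \<and>
     (\<exists>FS \<subseteq> S. isomorphic F pF mF FS p m)"

definition proper_s_extension :: "'b set \<Rightarrow> ('b \<Rightarrow> 'b \<Rightarrow> 'b) \<Rightarrow> ('b \<Rightarrow> 'b \<Rightarrow> 'b) \<Rightarrow> 'b \<Rightarrow>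
    'a set \<Rightarrow> ('a \<Rightarrow> 'a \<Rightarrow> 'a) \<Rightarrow> ('a \<Rightarrow> 'a \<Rightarrow> 'a) \<Rightarrow> bool" where
  "proper_s_extension S p m z F pF mF \<longleftrightarrow>
     s_extension S p m z F pF mF \<and> isomorphic (S_sub S m z z) p m F pF mF"

definition proper_s_ring_extension :: "'b set \<Rightarrow> ('b \<Rightarrow> 'b \<Rightarrow> 'b) \<Rightarrow> ('b \<Rightarrow> 'b \<Rightarrow> 'b) \<Rightarrow> 'b \<Rightarrow> 'b \<Rightarrow>
    'a set \<Rightarrow> ('a \<Rightarrow> 'a \<Rightarrow> 'a) \<Rightarrow> ('a \<Rightarrow> 'a \<Rightarrow> 'a) \<Rightarrow> bool" where
  "proper_s_ring_extension S p m z e F pF mF \<longleftrightarrow>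
     s_ring S p m z e \<and> proper_s_extension S p m z F pF mF"

definition pplus :: "'a::comm_ring_1 \<times> 'a \<Rightarrow> 'a \<times> 'a \<Rightarrow> 'a \<times> 'a" where
  "pplus s t = (case s of (x, y) \<Rightarrow> case t of (u, v) \<Rightarrow> (x + u, y + v))"

definition ptimes :: "'a::comm_ring_1 \<times> 'a \<Rightarrow> 'a \<times> 'a \<Rightarrow> 'a \<times> 'a" where
  "ptimes s t = (case s of (x, y) \<Rightarrow> case t of (u, v) \<Rightarrow>
      (x * u + y + v - x * v - y * u, y * v + x * v + y * u))"

end

theory Submission
  imports Defs
begin

text \<open>Since (0,0) * (u,v) = (v,0), the layer of alpha is empty unless alpha lies on the
  first axis, and then it is the horizontal line through alpha. In particular the zero layer is
  R \<times> {0}, on which the product reduces to (x u, 0), so x \<mapsto> (x,0) identifies it with R.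
  Every layer is a translate of the zero layer, so each of its points is a base, and the
  remaining axioms are polynomial identities in R.\<close>

lemma pplus_Pair [simp]: "pplus (x, y) (u, v) = (x + u, y + v)"
  by (simp add: pplus_def)

lemma ptimes_Pair [simp]:
  "ptimes (x, y) (u, v) = (x * u + y + v - x * v - y * u, y * v + x * v + y * u)"
  by (simp add: ptimes_def)

lemma s_neg_pplus [simp]: "s_neg UNIV pplus (0, 0) (a, b) = (- a, - b :: 'a::comm_ring_1)"
  unfolding s_neg_def
proof (rule the_equality)
  fix t assume "t \<in> UNIV \<and> pplus (a, b) t = (0, 0)"
  then show "t = (- a, - b)" by (cases t) (simp add: add_eq_0_iff)
qed simp

lemma s_sub_pplus [simp]: "s_sub UNIV pplus (0, 0) (a, b) (c, d) = (a - c, b - d :: 'a::comm_ring_1)"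
  by (simp add: s_sub_def)

lemma S_sub_ptimes:
  "S_sub (UNIV :: ('a::comm_ring_1 \<times> 'a) set) ptimes (0, 0) \<alpha> =
     (if snd \<alpha> = 0 then {s. snd s = fst \<alpha>} else {})"
  by (cases \<alpha>) (auto simp: S_sub_def)

lemma S_sub_ptimes_zero:
  "S_sub (UNIV :: ('a::comm_ring_1 \<times> 'a) set) ptimes (0, 0) (0, 0) = {s. snd s = 0}"
  by (simp add: S_sub_ptimes)

lemma S_Lambda_ptimes:
  "S_Lambda (UNIV :: ('a::comm_ring_1 \<times> 'a) set) ptimes (0, 0) = {\<alpha>. snd \<alpha> = 0}"
  by (auto simp: S_Lambda_def S_sub_ptimes)

lemma is_base_ptimes:
  fixes \<alpha> q :: "'a::comm_ring_1 \<times> 'a"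
  assumes "snd \<alpha> = 0" and "snd q = fst \<alpha>"
  shows "is_base UNIV pplus ptimes (0, 0) \<alpha> q"
proof -
  obtain c a where q: "q = (c, a)" by (cases q)
  have "\<exists>\<beta>\<in>{s. snd s = 0}. s = pplus q \<beta>" if "snd s = fst \<alpha>" for s :: "'a \<times> 'a"
    using assms that q by (intro bexI[of _ "(fst s - c, 0)"]) (cases s; simp)+
  then show ?thesis
    using assms q by (auto simp: is_base_def S_sub_ptimes)
qed

lemma s_structure_pair: "s_structure (UNIV :: ('a::comm_ring_1 \<times> 'a) set) pplus ptimes (0, 0)"
  unfolding s_structure_def
proof (intro conjI ballI)
  fix a b c :: "'a \<times> 'a"
  show "pplus (pplus a b) c = pplus a (pplus b c)"
    by (cases a; cases b; cases c) (simp add: add.assoc)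
  show "pplus a b = pplus b a" by (cases a; cases b) (simp add: add.commute)
  show "pplus (0, 0) a = a" by (cases a) simp
  show "\<exists>b\<in>UNIV. pplus a b = (0, 0)"
    by (cases a) (rule bexI[of _ "(- fst a, - snd a)"], auto)
  show "\<exists>s\<in>UNIV. ptimes (0, 0) s \<noteq> (0, 0) \<or> ptimes s (0, 0) \<noteq> (0, 0)"
    by (rule bexI[of _ "(0, 1)"]) auto
qed simp_all

lemma s_commutative_ptimes: "s_commutative (UNIV :: ('a::comm_ring_1 \<times> 'a) set) ptimes"
  unfolding s_commutative_def by (auto simp: algebra_simps)

lemma wheel_distributive_ptimes:
  "wheel_distributive (UNIV :: ('a::comm_ring_1 \<times> 'a) set) pplus ptimes (0, 0)"
  unfolding wheel_distributive_def by (auto simp: algebra_simps)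

lemma s_associative_ptimes:
  "s_associative (UNIV :: ('a::comm_ring_1 \<times> 'a) set) pplus ptimes (0, 0) (1, 0)"
  unfolding s_associative_def S_sub_ptimes_zero by (auto simp: algebra_simps)

lemma has_standard_bases_ptimes:
  "has_standard_bases (UNIV :: ('a::comm_ring_1 \<times> 'a) set) pplus ptimes (0, 0) (1, 0)"
proof -
  have "coordinated (UNIV :: ('a \<times> 'a) set) pplus ptimes (0, 0)"
    unfolding coordinated_def S_Lambda_ptimes S_sub_ptimes_zero
    using is_base_ptimes[where q = "(c, fst \<alpha>)" for c \<alpha>] by fastforce
  moreover have "is_base UNIV pplus ptimes (0, 0) (1, 0) (0 :: 'a, 1 :: 'a)"
    by (rule is_base_ptimes) simp_all
  moreover have "\<forall>\<alpha>\<in>S_Lambda UNIV ptimes (0, 0).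
      is_base UNIV pplus ptimes (0, 0) \<alpha> (s_sub UNIV pplus (0, 0) (ptimes \<alpha> (pplus (0, 1) (1, 0))) (1 :: 'a, 0 :: 'a))"
    by (auto simp: S_Lambda_ptimes intro!: is_base_ptimes)
  ultimately show ?thesis
    unfolding has_standard_bases_def using s_commutative_ptimes by blast
qed

lemma s_ring_pair: "s_ring (UNIV :: ('a::comm_ring_1 \<times> 'a) set) pplus ptimes (0, 0) (1, 0)"
proof -
  have "essential_s_structure (UNIV :: ('a \<times> 'a) set) pplus ptimes (0, 0) (1, 0)"
    unfolding essential_s_structure_def
    using s_structure_pair s_commutative_ptimes wheel_distributive_ptimes s_associative_ptimes
      has_standard_bases_ptimes
    by (auto simp: S_sub_ptimes_zero)
  moreover have "is_unity (UNIV :: ('a \<times> 'a) set) ptimes (0, 0) (1, 0)"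
    by (auto simp: is_unity_def S_Lambda_ptimes)
  ultimately show ?thesis
    unfolding s_ring_def by blast
qed

lemma iso_on_Pair_zero:
  "iso_on (UNIV :: 'a::comm_ring_1 set) (+) (*) {s. snd s = 0} pplus ptimes (\<lambda>x. (x, 0))"
  unfolding iso_on_def bij_betw_def inj_on_def by auto

lemma iso_on_fst_zero:
  "iso_on {s. snd s = (0 :: 'a::comm_ring_1)} pplus ptimes UNIV (+) (*) fst"
  unfolding iso_on_def bij_betw_def inj_on_def by (auto simp: image_iff)

theorem theorem3p4p1:
  shows "proper_s_ring_extension (UNIV :: ('a::comm_ring_1 \<times> 'a) set) pplus ptimes (0, 0) (1, 0)
           (UNIV :: 'a set) (+) (*)"
  unfolding proper_s_ring_extension_def proper_s_extension_def s_extension_def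
    isomorphic_def S_sub_ptimes_zero
  using s_ring_pair s_structure_pair iso_on_Pair_zero iso_on_fst_zero by blast

end
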